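(* Let $G$ be a $\sigma$-finite abelian group and fix an exhausting sequence $(G_n)_{n\geq 1}$ of $G$. Let $A\subset G$ and $B\subset G$ satisfy at least one of the following three hypotheses: \begin{enumerate} \item $\underline{\mathrm{d}}(A+B)< \underline{\mathrm{d}}(A)+\underline{\mathrm{d}}(B)$; \item $\overline{\mathrm{d}}(A+B)< \overline{\mathrm{d}}(A)+\overline{\mathrm{d}}(B)$, and $A=B$ or $A=-B$; \item $\overline{\mathrm{d}}(A+B)< \overline{\mathrm{d}}(A)+\underline{\mathrm{d}}(B)$. \end{enumerate} Then the subgroup $H=\mathrm{Stab}(A+B)$ has finite index $q=[G:H]$ in $G$, and $H$ admits a density, with $\mathrm{d}(H)=q^{-1}$. Moreover, if $a,b,c$ denote the numbers of cosets of $H$ in $G$ that meet $A$, $B$, $A+B$ respectively, then $c=a+b-1$.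
   Context: A group $G$ is $\sigma$-finite if it is infinite and admits an exhausting sequence, i.e. a non-decreasing sequence $(G_n)_{n\ge1}$ of finite subgroups with $G=\bigcup_{n\ge1}G_n$. For $A\subset G$ (with respect to the fixed exhausting sequence) the lower and upper asymptotic densities are $\underline{\mathrm{d}}(A)=\liminf_{n\to\infty}\frac{|A\cap G_n|}{|G_n|}$ and $\overline{\mathrm{d}}(A)=\limsup_{n\to\infty}\frac{|A\cap G_n|}{|G_n|}$; if they coincide, $A$ is said to admit a density, and the common value is denoted $\mathrm{d}(A)$. For $X\subset G$, $\mathrm{Stab}(X)=\{g\in G: g+x\in X \text{ for all } x\in X\}$ is the stabilizer (period) of $X$. $A+B=\{a+b: a\in A, b\in B\}$ and $-B=\{-b: b\in B\}$. *)

theory Defs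
  imports Complex_Main "HOL-Library.Extended_Real"
begin

definition is_subgroup :: "'a::ab_group_add set \<Rightarrow> bool" where
  "is_subgroup H \<longleftrightarrow> 0 \<in> H \<and> (\<forall>x\<in>H. \<forall>y\<in>H. x - y \<in> H)"

text \<open>Exhausting sequence of a sigma-finite abelian group (indexed from 0 instead of 1).\<close>
definition exhausting_seq :: "(nat \<Rightarrow> 'a::ab_group_add set) \<Rightarrow> bool" where
  "exhausting_seq Gs \<longleftrightarrow> (\<forall>n. finite (Gs n) \<and> is_subgroup (Gs n)) \<and> mono Gs
     \<and> (\<Union>n. Gs n) = UNIV"

definition sigma_finite_group :: "'a::ab_group_add itself \<Rightarrow> bool" where
  "sigma_finite_group _ \<longleftrightarrow> infinite (UNIV :: 'a set) \<and> (\<exists>Gs::nat \<Rightarrow> 'a set. exhausting_seq Gs)"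

definition ratio :: "(nat \<Rightarrow> 'a set) \<Rightarrow> 'a set \<Rightarrow> nat \<Rightarrow> ereal" where
  "ratio Gs A n = ereal (real (card (A \<inter> Gs n)) / real (card (Gs n)))"

definition lower_density :: "(nat \<Rightarrow> 'a set) \<Rightarrow> 'a set \<Rightarrow> ereal" where
  "lower_density Gs A = liminf (ratio Gs A)"

definition upper_density :: "(nat \<Rightarrow> 'a set) \<Rightarrow> 'a set \<Rightarrow> ereal" where
  "upper_density Gs A = limsup (ratio Gs A)"

definition sumset :: "'a::ab_group_add set \<Rightarrow> 'a set \<Rightarrow> 'a set" where
  "sumset A B = {a + b | a b. a \<in> A \<and> b \<in> B}"

definition Stab :: "'a::ab_group_add set \<Rightarrow> 'a set" where
  "Stab X = {g. \<forall>x\<in>X. g + x \<in> X}"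

definition cosets :: "'a::ab_group_add set \<Rightarrow> 'a set set" where
  "cosets H = (\<lambda>g. (\<lambda>h. g + h) ` H) ` UNIV"

definition cosets_meeting :: "'a::ab_group_add set \<Rightarrow> 'a set \<Rightarrow> nat" where
  "cosets_meeting H X = card {C \<in> cosets H. C \<inter> X \<noteq> {}}"

end

theory Submission
  imports Defs "HOL-Analysis.Extended_Real_Limits"
begin

(* Kneser's inequality |A| + |B| <= |A + B| + |Stab (A + B)| for finite sets (via DeVos'
   e-transform argument) is applied inside each finite subgroup G_n to A Int G_n and B Int G_n.
   If the stabilisers L_n of these truncated sumsets had vanishing relative size, the densities
   would satisfy the reverse of each of the three hypotheses; so |G_n| <= M |L_n| for infinitely
   many n.  Every element outside H = Stab (A + B) eventually lies outside L_n, so a pigeonhole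
   argument in G_n shows that H has at most M cosets.  A union of k cosets of a subgroup of finite
   index q has density exactly k / q; this gives d(H) = 1/q and, with the hypothesis, c < a + b.
   Finally Kneser's inequality in a G_n meeting every coset of H, applied to the H-periodic hulls
   of A and B, gives a + b <= c + 1. *)


section \<open>Sumsets and stabilisers\<close>

lemma add_in_sumset: "a \<in> A \<Longrightarrow> b \<in> B \<Longrightarrow> a + b \<in> sumset A B"
  unfolding sumset_def by blast

lemma sumset_commute: "sumset A B = sumset B (A :: 'a::ab_group_add set)"
  unfolding sumset_def using add.commute by blast

lemma sumset_mono: "A \<subseteq> A' \<Longrightarrow> B \<subseteq> B' \<Longrightarrow> sumset A B \<subseteq> sumset A' B'"
  unfolding sumset_def by blast

lemma finite_sumset:
  assumes "finite A" "finite B"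
  shows "finite (sumset A B)"
proof -
  have "sumset A B = (\<lambda>(a, b). a + b) ` (A \<times> B)"
    unfolding sumset_def by auto
  then show ?thesis
    using assms by simp
qed

lemma card_translate: "card ((+) c ` S) = card (S :: 'a::ab_group_add set)"
  by (rule card_image) (simp add: inj_on_def)

lemma translate_eq_if_subset:
  fixes X :: "'a::ab_group_add set"
  assumes "finite X" "(+) g ` X \<subseteq> X"
  shows "(+) g ` X = X"
  by (rule card_subset_eq[OF assms]) (rule card_translate)

lemma uminus_mem_if_add_closed:
  fixes M :: "'a::ab_group_add set"
  assumes "finite M" "0 \<in> M" "\<And>x y. x \<in> M \<Longrightarrow> y \<in> M \<Longrightarrow> x + y \<in> M" "g \<in> M"
  shows "- g \<in> M"
proof -
  have "(+) g ` M = M"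
    using assms by (intro translate_eq_if_subset) auto
  then obtain h where "h \<in> M" "g + h = 0"
    using assms(2) by (metis imageE)
  then show ?thesis
    by (metis neg_eq_iff_add_eq_0)
qed

lemma subgroup_zero: "is_subgroup H \<Longrightarrow> 0 \<in> H"
  unfolding is_subgroup_def by blast

lemma subgroup_diff: "is_subgroup H \<Longrightarrow> x \<in> H \<Longrightarrow> y \<in> H \<Longrightarrow> x - y \<in> H"
  unfolding is_subgroup_def by blast

lemma subgroup_uminus: "is_subgroup H \<Longrightarrow> x \<in> H \<Longrightarrow> - x \<in> H"
  using subgroup_diff[of H 0 x] subgroup_zero[of H] by simp

lemma subgroup_add: "is_subgroup H \<Longrightarrow> x \<in> H \<Longrightarrow> y \<in> H \<Longrightarrow> x + y \<in> H"
  using subgroup_diff[of H x "- y"] subgroup_uminus[of H y] by simp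

lemma sumset_subset_subgroup:
  "is_subgroup K \<Longrightarrow> A \<subseteq> K \<Longrightarrow> B \<subseteq> K \<Longrightarrow> sumset A B \<subseteq> K"
  unfolding sumset_def using subgroup_add by blast

lemma Stab_mem: "g \<in> Stab X \<Longrightarrow> x \<in> X \<Longrightarrow> g + x \<in> X"
  unfolding Stab_def by blast

lemma zero_in_Stab: "0 \<in> Stab X"
  unfolding Stab_def by simp

lemma Stab_add: "g \<in> Stab X \<Longrightarrow> h \<in> Stab X \<Longrightarrow> g + h \<in> Stab X"
  unfolding Stab_def by (simp add: add.assoc)

lemma Stab_uminus:
  assumes "finite X" "g \<in> Stab X"
  shows "- g \<in> Stab X"
proof -
  have "(+) g ` X = X"
    using assms by (intro translate_eq_if_subset) (auto simp: Stab_def)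
  show ?thesis
    unfolding Stab_def
  proof (intro CollectI ballI)
    fix x assume "x \<in> X"
    then obtain y where "y \<in> X" "x = g + y"
      using \<open>(+) g ` X = X\<close> by blast
    then show "- g + x \<in> X" by simp
  qed
qed

lemma is_subgroup_Stab_finite: "finite X \<Longrightarrow> is_subgroup (Stab X)"
  unfolding is_subgroup_def
  using zero_in_Stab Stab_add Stab_uminus by (metis diff_conv_add_uminus)

lemma Stab_subset_subgroup:
  assumes "is_subgroup K" "x \<in> X" "X \<subseteq> K"
  shows "Stab X \<subseteq> K"
proof
  fix g assume "g \<in> Stab X"
  then have "(g + x) - x \<in> K"
    using assms Stab_mem subgroup_diff by blast
  then show "g \<in> K" by simp
qed

lemma finite_Stab:
  assumes "finite X" "x \<in> X"
  shows "finite (Stab X)"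
proof -
  have "Stab X \<subseteq> (\<lambda>y. y - x) ` X"
    using Stab_mem[of _ X x] assms(2) by (auto intro!: image_eqI[where x = "_ + x"])
  then show ?thesis
    using assms(1) finite_surj by blast
qed

lemma sumset_Stab: "sumset X (Stab X) = X"
proof
  show "sumset X (Stab X) \<subseteq> X"
  proof
    fix y assume "y \<in> sumset X (Stab X)"
    then obtain x g where "x \<in> X" "g \<in> Stab X" "y = x + g"
      unfolding sumset_def by blast
    then show "y \<in> X"
      using Stab_mem[of g X x] by (simp add: add.commute)
  qed
  show "X \<subseteq> sumset X (Stab X)"
    using add_in_sumset[OF _ zero_in_Stab] by fastforce
qed

lemma sumset_sumset_Stab_subset:
  fixes A B :: "'a::ab_group_add set"
  defines "H \<equiv> Stab (sumset A B)"
  shows "sumset (sumset A H) (sumset B H) \<subseteq> sumset A B"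
proof
  fix x assume "x \<in> sumset (sumset A H) (sumset B H)"
  then obtain a b h h' where "a \<in> A" "b \<in> B" "h \<in> H" "h' \<in> H" "x = (a + h) + (b + h')"
    unfolding sumset_def by blast
  moreover from this have "(h + h') + (a + b) \<in> sumset A B"
    unfolding H_def using Stab_add Stab_mem add_in_sumset by blast
  ultimately show "x \<in> sumset A B"
    by (simp add: algebra_simps)
qed

section \<open>Kneser's inequality\<close>

lemma card_add_card_le_card_sumset_Int:
  fixes P Q H K :: "'a::ab_group_add set"
  assumes "finite P" "finite Q" "p0 \<in> P" "q0 \<in> Q" "finite (H \<inter> K)"
    and "\<And>p. p \<in> P \<Longrightarrow> p - p0 \<in> H" "\<And>q. q \<in> Q \<Longrightarrow> q - q0 \<in> K"
  shows "card P + card Q \<le> card (sumset P Q) + card (H \<inter> K)"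
proof -
  let ?U = "(+) p0 ` Q" and ?V = "(+) q0 ` P"
  have "?U \<union> ?V \<subseteq> sumset P Q"
    unfolding sumset_def using assms(3,4) add.commute by blast
  then have union: "card (?U \<union> ?V) \<le> card (sumset P Q)"
    by (intro card_mono finite_sumset assms(1,2))
  have "?U \<inter> ?V \<subseteq> (+) (p0 + q0) ` (H \<inter> K)"
  proof
    fix y assume "y \<in> ?U \<inter> ?V"
    then obtain p q where "p \<in> P" "q \<in> Q" "y = p0 + q" "y = q0 + p" by auto
    moreover from this have "q - q0 = p - p0" by (simp add: algebra_simps)
    ultimately show "y \<in> (+) (p0 + q0) ` (H \<inter> K)"
      using assms(6,7) by (auto intro!: image_eqI[where x = "q - q0"])
  qed
  then have inter: "card (?U \<inter> ?V) \<le> card (H \<inter> K)"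
    using card_mono[OF finite_imageI[OF assms(5)]] card_translate by metis
  have "card ?U + card ?V = card (?U \<union> ?V) + card (?U \<inter> ?V)"
    using assms(1,2) by (intro card_Un_Int) auto
  then show ?thesis
    using union inter by (simp add: card_translate)
qed

lemma translate_sumset_coset_parts_subset:
  fixes C1 C2 :: "'a::ab_group_add set"
  assumes "finite C1"
  shows "(+) (- x) ` sumset ((+) x ` Stab C1 \<inter> C2) ((+) x ` Stab C2 - C1) \<subseteq> C2 - C1"
proof
  fix z assume "z \<in> (+) (- x) ` sumset ((+) x ` Stab C1 \<inter> C2) ((+) x ` Stab C2 - C1)"
  then obtain t h where t: "t \<in> Stab C1" "x + t \<in> C2" and h: "h \<in> Stab C2" "x + h \<notin> C1"
    and z: "z = (x + t) + h"
    unfolding sumset_def by auto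
  have "z \<in> C2"
    using Stab_mem[OF h(1) t(2)] z by (simp add: add_ac)
  moreover have "z \<notin> C1"
  proof
    assume "z \<in> C1"
    then have "- t + z \<in> C1"
      using Stab_mem Stab_uminus[OF assms t(1)] by blast
    then show False
      using h(2) z by (simp add: algebra_simps)
  qed
  ultimately show "z \<in> C2 - C1" by blast
qed

lemma card_coset_parts_le:
  fixes C1 C2 :: "'a::ab_group_add set"
  assumes fin: "finite C1" "finite C2" and x: "x \<in> C1" "x \<in> C2"
    and escapes: "\<not> (+) x ` Stab C2 \<subseteq> C1"
  shows "card ((+) x ` Stab C1 \<inter> C2) + card ((+) x ` Stab C2 - C1)
    \<le> card (C2 - C1) + card (Stab C1 \<inter> Stab C2)"
proof -
  let ?P = "(+) x ` Stab C1 \<inter> C2" and ?Q = "(+) x ` Stab C2 - C1"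
  have fin_Stab: "finite (Stab C1)" "finite (Stab C2)"
    using finite_Stab fin x by blast+
  have "x \<in> ?P"
    using x zero_in_Stab[of C1] by (auto intro!: image_eqI[where x = 0])
  moreover obtain q0 where "q0 \<in> ?Q"
    using escapes by blast
  moreover have "q - q0 \<in> Stab C2" if q: "q \<in> ?Q" for q
  proof -
    obtain h h0 where "h \<in> Stab C2" "h0 \<in> Stab C2" "q = x + h" "q0 = x + h0"
      using q \<open>q0 \<in> ?Q\<close> by blast
    then show ?thesis
      using is_subgroup_Stab_finite[OF fin(2)] subgroup_diff by fastforce
  qed
  ultimately have "card ?P + card ?Q \<le> card (sumset ?P ?Q) + card (Stab C1 \<inter> Stab C2)"
    using fin_Stab by (intro card_add_card_le_card_sumset_Int) auto
  moreover have "card (sumset ?P ?Q) \<le> card (C2 - C1)"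
    using card_mono[OF _ translate_sumset_coset_parts_subset[OF fin(1), of x C2]] fin
    unfolding card_translate by simp
  ultimately show ?thesis by linarith
qed

lemma card_Un_eq_add_card_Diff:
  "finite A \<Longrightarrow> finite B \<Longrightarrow> card (A \<union> B) = card A + card (B - A)"
  by (metis Un_Diff_cancel card_Un_disjoint Diff_disjoint finite_Diff)

lemma min_card_Stab_le_if_coset_escapes:
  fixes C1 C2 :: "'a::ab_group_add set"
  assumes fin: "finite C1" "finite C2" and x: "x \<in> C1" "x \<in> C2"
    and escapes: "\<not> (+) x ` Stab C2 \<subseteq> C1"
  shows "min (card C1 + card (Stab C1)) (card C2 + card (Stab C2))
    \<le> card (C1 \<union> C2) + card (Stab C1 \<inter> Stab C2)"
proof -
  have fin_Stab: "finite (Stab C1)" "finite (Stab C2)"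
    using finite_Stab fin x by blast+
  have split1: "card ((+) x ` Stab C1 \<inter> C2) + card ((+) x ` Stab C1 - C2) = card (Stab C1)"
    using card_Int_Diff[of "(+) x ` Stab C1" C2] fin_Stab by (simp add: card_translate)
  have split2: "card ((+) x ` Stab C2 \<inter> C1) + card ((+) x ` Stab C2 - C1) = card (Stab C2)"
    using card_Int_Diff[of "(+) x ` Stab C2" C1] fin_Stab by (simp add: card_translate)
  have bound1: "card ((+) x ` Stab C1 \<inter> C2) + card ((+) x ` Stab C2 - C1)
      \<le> card (C2 - C1) + card (Stab C1 \<inter> Stab C2)"
    by (rule card_coset_parts_le[OF fin x escapes])
  have union1: "card (C1 \<union> C2) = card C1 + card (C2 - C1)"
    and union2: "card (C1 \<union> C2) = card C2 + card (C1 - C2)"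
    using fin card_Un_eq_add_card_Diff[of C2 C1] by (auto simp: card_Un_eq_add_card_Diff Un_commute)
  show ?thesis
  proof (cases "(+) x ` Stab C1 \<subseteq> C2")
    case True
    then have "card ((+) x ` Stab C1 - C2) = 0"
      by (metis Diff_eq_empty_iff card.empty)
    then have "card (Stab C1) \<le> card (C2 - C1) + card (Stab C1 \<inter> Stab C2)"
      using split1 bound1 by linarith
    then show ?thesis
      using union1 by linarith
  next
    case False
    have "card ((+) x ` Stab C2 \<inter> C1) + card ((+) x ` Stab C1 - C2)
      \<le> card (C1 - C2) + card (Stab C2 \<inter> Stab C1)"
      by (rule card_coset_parts_le[OF fin(2,1) x(2,1) False])
    then show ?thesis
      using split1 split2 bound1 union1 union2 by (simp add: Int_commute)
  qed
qed

lemma coset_subset_Diff_if_cosets_stay: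
  fixes C1 C2 :: "'a::ab_group_add set"
  assumes "finite C2" "y \<in> C2 - C1"
    and stay: "\<And>x. x \<in> C1 \<Longrightarrow> x \<in> C2 \<Longrightarrow> (+) x ` Stab C2 \<subseteq> C1"
  shows "(+) y ` Stab C2 \<subseteq> C2 - C1"
proof
  fix w assume "w \<in> (+) y ` Stab C2"
  then obtain h where h: "h \<in> Stab C2" "w = y + h" by blast
  have "h + y \<in> C2"
    using Stab_mem[OF h(1)] assms(2) by blast
  then have "w \<in> C2"
    using h(2) by (simp add: add.commute)
  moreover have "w \<notin> C1"
  proof
    assume "w \<in> C1"
    then have "w + - h \<in> C1"
      using stay \<open>w \<in> C2\<close> Stab_uminus[OF assms(1) h(1)] by blast
    then show False
      using assms(2) h(2) by simp
  qed
  ultimately show "w \<in> C2 - C1" by blast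
qed

lemma min_card_Stab_le_if_cosets_stay:
  fixes C1 C2 :: "'a::ab_group_add set"
  assumes fin: "finite C1" "finite C2" and "\<not> C1 \<subseteq> C2" "\<not> C2 \<subseteq> C1"
    and stay: "\<And>x. x \<in> C1 \<Longrightarrow> x \<in> C2 \<Longrightarrow> (+) x ` Stab C2 \<subseteq> C1 \<and> (+) x ` Stab C1 \<subseteq> C2"
  shows "min (card C1 + card (Stab C1)) (card C2 + card (Stab C2)) \<le> card (C1 \<union> C2)"
proof -
  obtain y z where y: "y \<in> C2 - C1" and z: "z \<in> C1 - C2"
    using assms(3,4) by blast
  have "card (Stab C2) \<le> card (C2 - C1)"
    using card_mono[OF _ coset_subset_Diff_if_cosets_stay[OF fin(2) y]] fin stay
    by (simp add: card_translate)
  moreover have "card (Stab C1) \<le> card (C1 - C2)"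
    using card_mono[OF _ coset_subset_Diff_if_cosets_stay[OF fin(1) z]] fin stay
    by (simp add: card_translate)
  moreover have "card (C1 \<union> C2) = card C1 + card (C2 - C1)"
    and "card (C1 \<union> C2) = card C2 + card (C1 - C2)"
    using fin card_Un_eq_add_card_Diff[of C2 C1] by (auto simp: card_Un_eq_add_card_Diff Un_commute)
  ultimately show ?thesis by linarith
qed

lemma min_card_Stab_le_card_Un_Stab:
  fixes C1 C2 :: "'a::ab_group_add set"
  assumes fin: "finite C1" "finite C2" and "C1 \<inter> C2 \<noteq> {}"
  shows "min (card C1 + card (Stab C1)) (card C2 + card (Stab C2))
    \<le> card (C1 \<union> C2) + card (Stab (C1 \<union> C2))"
proof -
  have Stab_Int: "card (Stab C1 \<inter> Stab C2) \<le> card (Stab (C1 \<union> C2))"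
  proof (rule card_mono)
    show "finite (Stab (C1 \<union> C2))"
      using assms by (metis finite_Stab finite_UnI Int_iff UnI1 ex_in_conv)
    show "Stab C1 \<inter> Stab C2 \<subseteq> Stab (C1 \<union> C2)"
      unfolding Stab_def by blast
  qed
  consider "C1 \<subseteq> C2" | "C2 \<subseteq> C1"
    | x where "x \<in> C1" "x \<in> C2" "\<not> (+) x ` Stab C2 \<subseteq> C1"
    | x where "x \<in> C1" "x \<in> C2" "\<not> (+) x ` Stab C1 \<subseteq> C2"
    | "\<not> C1 \<subseteq> C2" "\<not> C2 \<subseteq> C1"
      "\<And>x. x \<in> C1 \<Longrightarrow> x \<in> C2 \<Longrightarrow> (+) x ` Stab C2 \<subseteq> C1 \<and> (+) x ` Stab C1 \<subseteq> C2"
    by blast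
  then show ?thesis
  proof cases
    case 1
    then show ?thesis by (simp add: sup.absorb2)
  next
    case 2
    then show ?thesis by (simp add: sup.absorb1)
  next
    case (3 x)
    then show ?thesis
      using min_card_Stab_le_if_coset_escapes[OF fin] Stab_Int by fastforce
  next
    case (4 x)
    then have "min (card C2 + card (Stab C2)) (card C1 + card (Stab C1))
        \<le> card (C2 \<union> C1) + card (Stab C2 \<inter> Stab C1)"
      using min_card_Stab_le_if_coset_escapes[OF fin(2,1)] by blast
    with Stab_Int show ?thesis
      by (simp add: min.commute Un_commute Int_commute)
  next
    case 5
    then show ?thesis
      using min_card_Stab_le_if_cosets_stay[OF fin] Stab_Int by fastforce
  qed
qed

lemma card_Stab_Union_ge:
  fixes X :: "'a::ab_group_add set"
  assumes "finite F" "finite X" "N \<le> card X + card (Stab X)"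
    and "\<And>Y. Y \<in> F \<Longrightarrow> finite Y \<and> Y \<inter> X \<noteq> {} \<and> N \<le> card Y + card (Stab Y)"
  shows "N \<le> card (X \<union> \<Union>F) + card (Stab (X \<union> \<Union>F))"
  using assms(1,4)
proof (induction F rule: finite_induct)
  case empty
  then show ?case using assms(3) by simp
next
  case (insert Y F)
  then have "N \<le> card (X \<union> \<Union>F) + card (Stab (X \<union> \<Union>F))"
    and Y: "finite Y" "Y \<inter> X \<noteq> {}" "N \<le> card Y + card (Stab Y)"
    by auto
  moreover have "(X \<union> \<Union>F) \<inter> Y \<noteq> {}" "finite (X \<union> \<Union>F)"
    using Y insert.hyps(1) insert.prems assms(2) by auto
  ultimately have "N \<le> card ((X \<union> \<Union>F) \<union> Y) + card (Stab ((X \<union> \<Union>F) \<union> Y))"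
    using min_card_Stab_le_card_Un_Stab[of "X \<union> \<Union>F" Y] by linarith
  moreover have "X \<union> \<Union>(insert Y F) = (X \<union> \<Union>F) \<union> Y" by auto
  ultimately show ?case by simp
qed

lemma card_Int_translate:
  fixes A B :: "'a::ab_group_add set"
  shows "card (A \<inter> (+) e ` B) = card (B \<inter> (+) (- e) ` A)"
proof -
  have "A \<inter> (+) e ` B = (+) e ` (B \<inter> (+) (- e) ` A)"
    by (auto simp: image_iff algebra_simps)
  then show ?thesis
    by (simp add: card_translate)
qed

lemma card_etransform:
  fixes A B :: "'a::ab_group_add set"
  assumes "finite A" "finite B"
  shows "card (A \<union> (+) e ` B) + card (B \<inter> (+) (- e) ` A) = card A + card B"
  using card_Un_Int[of A "(+) e ` B"] assms card_Int_translate[of A e B]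
  by (simp add: card_translate)

lemma sumset_etransform_subset:
  fixes A B :: "'a::ab_group_add set"
  shows "sumset (A \<union> (+) e ` B) (B \<inter> (+) (- e) ` A) \<subseteq> sumset A B"
proof
  fix x assume "x \<in> sumset (A \<union> (+) e ` B) (B \<inter> (+) (- e) ` A)"
  then obtain p q where p: "p \<in> A \<union> (+) e ` B" and q: "q \<in> B" "q \<in> (+) (- e) ` A"
    and x: "x = p + q"
    unfolding sumset_def by blast
  show "x \<in> sumset A B"
  proof (cases "p \<in> A")
    case True
    then show ?thesis using q x add_in_sumset by blast
  next
    case False
    then obtain a b where "a \<in> A" "b \<in> B" "p = e + b" "q = - e + a"
      using p q by blast
    then show ?thesis
      using x add_in_sumset[of a A b B] by (simp add: algebra_simps)
  qed
qed

lemma card_etransform_less: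
  fixes A B :: "'a::ab_group_add set"
  assumes "finite B" "y \<in> B" "e + y \<notin> A"
  shows "card (B \<inter> (+) (- e) ` A) < card B"
proof (rule psubset_card_mono[OF assms(1)])
  have "y \<notin> (+) (- e) ` A"
    using assms(3) by (auto simp: algebra_simps)
  then show "B \<inter> (+) (- e) ` A \<subset> B"
    using assms(2) by blast
qed

lemma card_etransform_Int_less:
  fixes P Q :: "'a::ab_group_add set"
  assumes "finite P" "y \<in> P" "- e + y \<notin> Q"
  shows "card (Q \<inter> (+) (- e) ` P) < card P"
  using card_Int_translate[of Q "- e" P] card_etransform_less[OF assms(1,2), of "- e" Q] assms(3)
  by simp

lemma kneser_if_translates_inside:
  fixes A B :: "'a::ab_group_add set"
  assumes fin: "finite A" "finite B" and "a0 \<in> A" "b0 \<in> B"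
    and inside: "\<And>a. a \<in> A \<Longrightarrow> (+) (a - b0) ` B \<subseteq> A"
  shows "card A + card B \<le> card (sumset A B) + card (Stab (sumset A B))"
proof -
  let ?C = "sumset A B"
  have fin_C: "finite ?C"
    using fin by (rule finite_sumset)
  have "(+) b0 ` A \<subseteq> ?C"
    using \<open>b0 \<in> B\<close> unfolding sumset_def by (auto simp: add.commute)
  then have "card A \<le> card ?C"
    using card_mono[OF fin_C] by (metis card_translate)
  moreover have "(+) (- b0) ` B \<subseteq> Stab ?C"
  proof (intro subsetI, unfold Stab_def, intro CollectI ballI)
    fix g c assume "g \<in> (+) (- b0) ` B" "c \<in> ?C"
    then obtain b a b' where "b \<in> B" "a \<in> A" "b' \<in> B"
      and g: "g = - b0 + b" and c: "c = a + b'"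
      unfolding sumset_def by blast
    then have "(a - b0) + b' \<in> A"
      using inside by blast
    then have "(a - b0) + b' + b \<in> ?C"
      using \<open>b \<in> B\<close> by (rule add_in_sumset)
    then show "g + c \<in> ?C"
      unfolding g c by (simp add: algebra_simps)
  qed
  then have "card B \<le> card (Stab ?C)"
    using card_mono[OF finite_Stab[OF fin_C add_in_sumset[OF \<open>a0 \<in> A\<close> \<open>b0 \<in> B\<close>]]]
    by (metis card_translate)
  ultimately show ?thesis by linarith
qed

lemma kneser_etransform:
  fixes P Q :: "'a::ab_group_add set"
  assumes fin: "finite P" "finite Q" and "p \<in> P" "- e + p \<in> Q"
    and less: "card (Q \<inter> (+) (- e) ` P) < m"
    and IH: "\<And>A' B' :: 'a set. finite A' \<Longrightarrow> finite B' \<Longrightarrow> A' \<noteq> {} \<Longrightarrow> B' \<noteq> {}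
      \<Longrightarrow> min (card A') (card B') < m
      \<Longrightarrow> card A' + card B' \<le> card (sumset A' B') + card (Stab (sumset A' B'))"
  shows "card P + card Q \<le> card (sumset (P \<union> (+) e ` Q) (Q \<inter> (+) (- e) ` P))
    + card (Stab (sumset (P \<union> (+) e ` Q) (Q \<inter> (+) (- e) ` P)))"
proof -
  have "- e + p \<in> Q \<inter> (+) (- e) ` P"
    using assms(3,4) by blast
  then show ?thesis
    using IH[of "P \<union> (+) e ` Q" "Q \<inter> (+) (- e) ` P"] card_etransform[OF fin, of e] fin less \<open>p \<in> P\<close>
    by (auto simp: min_less_iff_disj)
qed

lemma sumset_eq_etransforms_Union:
  fixes A B :: "'a::ab_group_add set"
  assumes "a0 \<in> A" "b0 \<in> B"
  shows "sumset A B = sumset (A \<union> (+) (a0 - b0) ` B) (B \<inter> (+) (- (a0 - b0)) ` A)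
    \<union> (\<Union>a\<in>{a \<in> A. \<not> (+) (a - b0) ` B \<subseteq> A}.
        sumset (B \<union> (+) (b0 - a) ` A) (A \<inter> (+) (- (b0 - a)) ` B))"
    (is "_ = ?X \<union> (\<Union>a\<in>?good. ?Y a)")
proof
  have "?X \<subseteq> sumset A B"
    by (rule sumset_etransform_subset)
  moreover have "?Y a \<subseteq> sumset A B" for a
    using sumset_etransform_subset[of B "b0 - a" A] by (simp only: sumset_commute[of B])
  ultimately show "?X \<union> (\<Union>a\<in>?good. ?Y a) \<subseteq> sumset A B"
    by blast
  show "sumset A B \<subseteq> ?X \<union> (\<Union>a\<in>?good. ?Y a)"
  proof
    fix c assume "c \<in> sumset A B"
    then obtain a b where "a \<in> A" "b \<in> B" and c: "c = a + b"
      unfolding sumset_def by blast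
    show "c \<in> ?X \<union> (\<Union>a\<in>?good. ?Y a)"
    proof (cases "a \<in> ?good")
      case True
      have "b \<in> B \<union> (+) (b0 - a) ` A" "a \<in> A \<inter> (+) (- (b0 - a)) ` B"
        using \<open>a \<in> A\<close> \<open>b \<in> B\<close> \<open>b0 \<in> B\<close> by (auto intro!: image_eqI[where x = b0])
      then have "c \<in> ?Y a"
        using add_in_sumset c by (metis add.commute)
      then show ?thesis
        using True by blast
    next
      case False
      then have "(a - b0) + b \<in> A \<union> (+) (a0 - b0) ` B"
        using \<open>a \<in> A\<close> \<open>b \<in> B\<close> by blast
      moreover have "b0 \<in> B \<inter> (+) (- (a0 - b0)) ` A"
        using assms by (auto intro!: image_eqI[where x = a0])
      ultimately have "((a - b0) + b) + b0 \<in> ?X"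
        by (rule add_in_sumset)
      then show ?thesis
        using c by (simp add: algebra_simps)
    qed
  qed
qed

lemma kneser_step:
  fixes A B :: "'a::ab_group_add set"
  assumes fin: "finite A" "finite B" and "a0 \<in> A" "b0 \<in> B" "card B \<le> card A"
    and IH: "\<And>A' B' :: 'a set. finite A' \<Longrightarrow> finite B' \<Longrightarrow> A' \<noteq> {} \<Longrightarrow> B' \<noteq> {}
      \<Longrightarrow> min (card A') (card B') < card B
      \<Longrightarrow> card A' + card B' \<le> card (sumset A' B') + card (Stab (sumset A' B'))"
  shows "card A + card B \<le> card (sumset A B) + card (Stab (sumset A B))"
proof (cases "\<forall>a\<in>A. (+) (a - b0) ` B \<subseteq> A")
  case True
  then show ?thesis
    using kneser_if_translates_inside[OF fin \<open>a0 \<in> A\<close> \<open>b0 \<in> B\<close>] by blast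
next
  case False
  then obtain a1 where "a1 \<in> A" "\<not> (+) (a1 - b0) ` B \<subseteq> A"
    by blast
  define good where "good = {a \<in> A. \<not> (+) (a - b0) ` B \<subseteq> A}"
  let ?X = "sumset (A \<union> (+) (a1 - b0) ` B) (B \<inter> (+) (- (a1 - b0)) ` A)"
  let ?Y = "\<lambda>a. sumset (B \<union> (+) (b0 - a) ` A) (A \<inter> (+) (- (b0 - a)) ` B)"
  have "card A + card B \<le> card ?X + card (Stab ?X)"
  proof (rule kneser_etransform[OF fin \<open>a1 \<in> A\<close> _ _ IH])
    show "- (a1 - b0) + a1 \<in> B"
      using \<open>b0 \<in> B\<close> by simp
    show "card (B \<inter> (+) (- (a1 - b0)) ` A) < card B"
      using card_etransform_less[OF fin(2)] \<open>\<not> (+) (a1 - b0) ` B \<subseteq> A\<close> by blast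
  qed
  moreover have "card A + card B \<le> card (?Y a) + card (Stab (?Y a))" if "a \<in> good" for a
  proof -
    obtain y where "y \<in> B" "- (b0 - a) + y \<notin> A"
      using \<open>a \<in> good\<close> unfolding good_def by auto
    moreover have "- (b0 - a) + b0 \<in> A"
      using \<open>a \<in> good\<close> unfolding good_def by simp
    ultimately have "card B + card A \<le> card (?Y a) + card (Stab (?Y a))"
      by (intro kneser_etransform[OF fin(2,1) \<open>b0 \<in> B\<close> _ card_etransform_Int_less[OF fin(2)] IH])
    then show ?thesis
      by simp
  qed
  moreover have "a + b0 \<in> ?Y a \<inter> ?X" if "a \<in> A" for a
  proof -
    have "b0 + a \<in> ?Y a"
      using \<open>a \<in> A\<close> \<open>b0 \<in> B\<close> by (intro add_in_sumset) auto
    moreover have "a + b0 \<in> ?X"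
      using \<open>a \<in> A\<close> \<open>a1 \<in> A\<close> \<open>b0 \<in> B\<close> by (intro add_in_sumset) (auto intro!: image_eqI[where x = a1])
    ultimately show ?thesis
      by (simp add: add.commute)
  qed
  moreover have "finite (?Y ` good)" "finite ?X" "finite (?Y a)" for a
    using fin unfolding good_def by (auto intro: finite_sumset)
  ultimately have "card A + card B \<le> card (?X \<union> \<Union>(?Y ` good)) + card (Stab (?X \<union> \<Union>(?Y ` good)))"
    by (intro card_Stab_Union_ge) (auto simp: good_def)
  also have "?X \<union> \<Union>(?Y ` good) = sumset A B"
    using sumset_eq_etransforms_Union[OF \<open>a1 \<in> A\<close> \<open>b0 \<in> B\<close>] unfolding good_def by simp
  finally show ?thesis .
qed

theorem kneser_inequality:
  fixes A B :: "'a::ab_group_add set"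
  assumes "finite A" "finite B" "A \<noteq> {}" "B \<noteq> {}"
  shows "card A + card B \<le> card (sumset A B) + card (Stab (sumset A B))"
  using assms
proof (induction "min (card A) (card B)" arbitrary: A B rule: less_induct)
  case less
  obtain a0 b0 where "a0 \<in> A" "b0 \<in> B"
    using less.prems by blast
  show ?case
  proof (cases "card B \<le> card A")
    case True
    show ?thesis
    proof (rule kneser_step[OF less.prems(1,2) \<open>a0 \<in> A\<close> \<open>b0 \<in> B\<close> True])
      fix A' B' :: "'a set"
      assume "finite A'" "finite B'" "A' \<noteq> {}" "B' \<noteq> {}" "min (card A') (card B') < card B"
      then show "card A' + card B' \<le> card (sumset A' B') + card (Stab (sumset A' B'))"
        using less.hyps[of A' B'] True by (simp add: min.absorb2)
    qed
  next
    case False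
    have "card B + card A \<le> card (sumset B A) + card (Stab (sumset B A))"
    proof (rule kneser_step[OF less.prems(2,1) \<open>b0 \<in> B\<close> \<open>a0 \<in> A\<close>])
      show "card A \<le> card B"
        using False by simp
      fix A' B' :: "'a set"
      assume "finite A'" "finite B'" "A' \<noteq> {}" "B' \<noteq> {}" "min (card A') (card B') < card A"
      then show "card A' + card B' \<le> card (sumset A' B') + card (Stab (sumset A' B'))"
        using less.hyps[of A' B'] False by (simp add: min_def)
    qed
    then show ?thesis
      by (simp add: sumset_commute[of B] add.commute)
  qed
qed

section \<open>Cosets\<close>

lemma coset_mem_iff: "x \<in> (+) g ` H \<longleftrightarrow> x - g \<in> (H :: 'a::ab_group_add set)"
proof
  show "x \<in> (+) g ` H \<Longrightarrow> x - g \<in> H" by auto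
  show "x - g \<in> H \<Longrightarrow> x \<in> (+) g ` H" by (auto intro!: image_eqI[where x = "x - g"])
qed

lemma coset_in_cosets: "(+) g ` H \<in> cosets H"
  unfolding cosets_def by blast

lemma subgroup_in_cosets: "H \<in> cosets (H :: 'a::ab_group_add set)"
  using coset_in_cosets[of 0 H] by simp

lemma mem_own_coset: "is_subgroup H \<Longrightarrow> g \<in> (+) g ` H"
  using subgroup_zero by (auto simp: coset_mem_iff)

lemma coset_eq_if_mem:
  assumes "is_subgroup H" "C \<in> cosets H" "x \<in> C"
  shows "C = (+) x ` H"
proof -
  obtain g where C: "C = (+) g ` H"
    using assms(2) unfolding cosets_def by blast
  then have "x - g \<in> H"
    using assms(3) coset_mem_iff by blast
  moreover have "y - g = (y - x) + (x - g)" "y - x = (y - g) - (x - g)" for y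
    by simp_all
  ultimately have "y - g \<in> H \<longleftrightarrow> y - x \<in> H" for y
    using subgroup_add[OF assms(1)] subgroup_diff[OF assms(1)] by metis
  then show ?thesis
    unfolding C set_eq_iff coset_mem_iff by blast
qed

lemma cosets_disjoint:
  assumes "is_subgroup H" "C \<in> cosets H" "C' \<in> cosets H" "x \<in> C" "x \<in> C'"
  shows "C = C'"
  using coset_eq_if_mem[OF assms(1)] assms(2-) by metis

lemma Union_cosets: "is_subgroup H \<Longrightarrow> \<Union>(cosets H) = UNIV"
  by (metis UNIV_eq_I UnionI coset_in_cosets mem_own_coset)

lemma Union_cosets_meeting:
  assumes "is_subgroup H"
  shows "\<Union>{C \<in> cosets H. C \<inter> X \<noteq> {}} = sumset X H"
proof
  show "\<Union>{C \<in> cosets H. C \<inter> X \<noteq> {}} \<subseteq> sumset X H"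
  proof
    fix y assume "y \<in> \<Union>{C \<in> cosets H. C \<inter> X \<noteq> {}}"
    then obtain C x where "C \<in> cosets H" "y \<in> C" "x \<in> C" "x \<in> X" by blast
    then have "y \<in> (+) x ` H"
      using coset_eq_if_mem[OF assms] by blast
    then show "y \<in> sumset X H"
      using \<open>x \<in> X\<close> unfolding sumset_def by blast
  qed
  show "sumset X H \<subseteq> \<Union>{C \<in> cosets H. C \<inter> X \<noteq> {}}"
  proof
    fix y assume "y \<in> sumset X H"
    then obtain x h where "x \<in> X" "h \<in> H" "y = x + h"
      unfolding sumset_def by blast
    then have "y \<in> (+) x ` H" "x \<in> (+) x ` H"
      using mem_own_coset[OF assms] by auto
    then show "y \<in> \<Union>{C \<in> cosets H. C \<inter> X \<noteq> {}}"
      using \<open>x \<in> X\<close> coset_in_cosets by blast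
  qed
qed

lemma cosets_meeting_empty: "cosets_meeting H {} = 0"
  unfolding cosets_meeting_def by simp

lemma cosets_meeting_le_card_cosets:
  "finite (cosets H) \<Longrightarrow> cosets_meeting H X \<le> card (cosets H)"
  unfolding cosets_meeting_def by (intro card_mono) auto

lemma cosets_UNIV: "cosets (UNIV :: 'a::ab_group_add set) = {UNIV}"
  unfolding cosets_def by (auto simp: surj_plus)

lemma Stab_restricted_sumset_subset:
  fixes A B K :: "'a::ab_group_add set"
  defines "H \<equiv> Stab (sumset A B)"
  assumes "is_subgroup H" and meets: "\<forall>C\<in>cosets H. C \<inter> K \<noteq> {}"
  shows "Stab (sumset (sumset A H \<inter> K) (sumset B H \<inter> K)) \<subseteq> H"
proof
  fix g assume g: "g \<in> Stab (sumset (sumset A H \<inter> K) (sumset B H \<inter> K))"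
  show "g \<in> H"
    unfolding H_def Stab_def
  proof (intro CollectI ballI)
    fix s assume "s \<in> sumset A B"
    then obtain a b where "a \<in> A" "b \<in> B" and s: "s = a + b"
      unfolding sumset_def by blast
    obtain z z' where z: "z - a \<in> H" "z \<in> K" and z': "z' - b \<in> H" "z' \<in> K"
      using meets coset_in_cosets unfolding coset_mem_iff[symmetric] by (meson disjoint_iff)
    have "z \<in> sumset A H" "z' \<in> sumset B H"
      using add_in_sumset[OF \<open>a \<in> A\<close> z(1)] add_in_sumset[OF \<open>b \<in> B\<close> z'(1)] by simp_all
    then have "z + z' \<in> sumset (sumset A H \<inter> K) (sumset B H \<inter> K)"
      using z(2) z'(2) by (simp add: add_in_sumset)
    then have "g + (z + z') \<in> sumset (sumset A H) (sumset B H)"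
      using Stab_mem[OF g] sumset_mono[of "sumset A H \<inter> K" "sumset A H" "sumset B H \<inter> K"]
      by blast
    then have "g + (z + z') \<in> sumset A B"
      using sumset_sumset_Stab_subset[of A B] unfolding H_def by blast
    moreover have "(a - z) + (b - z') \<in> H"
      using subgroup_add[OF assms(2) subgroup_uminus[OF assms(2) z(1)] subgroup_uminus[OF assms(2) z'(1)]]
      by simp
    ultimately have "((a - z) + (b - z')) + (g + (z + z')) \<in> sumset A B"
      using Stab_mem unfolding H_def by blast
    then show "g + s \<in> sumset A B"
      unfolding s by (simp add: algebra_simps)
  qed
qed

lemma finite_cosets_if_incongruent_bounded:
  assumes "is_subgroup H"
    and bounded: "\<And>F. finite F \<Longrightarrow> (\<And>x y. x \<in> F \<Longrightarrow> y \<in> F \<Longrightarrow> x \<noteq> y \<Longrightarrow> x - y \<notin> H)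
      \<Longrightarrow> card F \<le> M"
  shows "finite (cosets H)"
proof (rule ccontr)
  assume "infinite (cosets H)"
  then obtain \<D> where \<D>: "finite \<D>" "card \<D> = Suc M" "\<D> \<subseteq> cosets H"
    using infinite_arbitrarily_large by blast
  define r where "r C = (SOME x. x \<in> C)" for C :: "'a set"
  have r: "r C \<in> C" if "C \<in> cosets H" for C
  proof -
    have "\<exists>x. x \<in> C"
      using that mem_own_coset[OF assms(1)] unfolding cosets_def by blast
    then show ?thesis
      unfolding r_def by (rule someI_ex)
  qed
  have "inj_on r \<D>"
    using r cosets_disjoint[OF assms(1)] \<D>(3) by (metis inj_onI subsetD)
  then have "card (r ` \<D>) = Suc M"
    using \<D>(2) card_image by metis
  moreover have "card (r ` \<D>) \<le> M"
  proof (rule bounded)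
    show "finite (r ` \<D>)"
      using \<D>(1) by simp
    fix x y assume "x \<in> r ` \<D>" "y \<in> r ` \<D>" "x \<noteq> y"
    then obtain C C' where C: "C \<in> cosets H" "C' \<in> cosets H" "x = r C" "y = r C'" "C \<noteq> C'"
      using \<D>(3) by blast
    show "x - y \<notin> H"
    proof
      assume "x - y \<in> H"
      then have "x \<in> (+) (r C') ` H"
        using C(4) by (simp add: coset_mem_iff)
      then have "x \<in> C'"
        using coset_eq_if_mem[OF assms(1) C(2) r[OF C(2)]] by metis
      then show False
        using cosets_disjoint[OF assms(1) C(1,2) _ \<open>x \<in> C'\<close>] r[OF C(1)] C(3,5) by blast
    qed
  qed
  ultimately show False by simp
qed

lemma card_mult_card_subgroup_le:
  assumes "is_subgroup L" "finite L" "finite G" "finite F"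
    and inside: "\<And>x. x \<in> F \<Longrightarrow> (+) x ` L \<subseteq> G"
    and incongruent: "\<And>x y. x \<in> F \<Longrightarrow> y \<in> F \<Longrightarrow> x \<noteq> y \<Longrightarrow> x - y \<notin> L"
  shows "card F * card L \<le> card G"
proof -
  have "card (\<Union>x\<in>F. (+) x ` L) = (\<Sum>x\<in>F. card ((+) x ` L))"
  proof (rule card_UN_disjoint)
    show "\<forall>x\<in>F. \<forall>y\<in>F. x \<noteq> y \<longrightarrow> (+) x ` L \<inter> (+) y ` L = {}"
    proof (intro ballI impI)
      fix x y assume "x \<in> F" "y \<in> F" "x \<noteq> y"
      show "(+) x ` L \<inter> (+) y ` L = {}"
      proof (rule ccontr)
        assume "(+) x ` L \<inter> (+) y ` L \<noteq> {}"
        then obtain l l' where "l \<in> L" "l' \<in> L" "x + l = y + l'" by blast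
        then have "x - y = l' - l"
          by (simp add: algebra_simps eq_diff_eq)
        then have "x - y \<in> L"
          using subgroup_diff[OF assms(1)] \<open>l \<in> L\<close> \<open>l' \<in> L\<close> by simp
        then show False
          using incongruent \<open>x \<in> F\<close> \<open>y \<in> F\<close> \<open>x \<noteq> y\<close> by blast
      qed
    qed
  qed (use assms(2,4) in auto)
  also have "\<dots> = card F * card L"
    by (simp add: card_translate)
  finally show ?thesis
    using card_mono[OF assms(3)] inside by (metis UN_least)
qed

section \<open>Densities along an exhausting sequence\<close>

lemma limsup_add_liminf_le:
  fixes y z :: "nat \<Rightarrow> ereal"
  assumes "\<And>n. 0 \<le> y n" "\<And>n. 0 \<le> z n"
  shows "limsup y + liminf z \<le> limsup (\<lambda>n. y n + z n)"
proof -
  obtain r where r: "strict_mono r" "(y \<circ> r) \<longlonglongrightarrow> limsup y"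
    using limsup_subseq_lim by blast
  have "limsup y = liminf (y \<circ> r)"
    using lim_imp_Liminf[OF _ r(2)] by simp
  moreover have "liminf z \<le> liminf (z \<circ> r)"
    by (rule liminf_subseq_mono[OF r(1)])
  ultimately have "limsup y + liminf z \<le> liminf (y \<circ> r) + liminf (z \<circ> r)"
    by (simp add: add_left_mono)
  also have "\<dots> \<le> liminf (\<lambda>n. (y \<circ> r) n + (z \<circ> r) n)"
    by (rule Liminf_add_le) (auto simp: assms)
  also have "\<dots> \<le> limsup (\<lambda>n. (y \<circ> r) n + (z \<circ> r) n)"
    by (rule Liminf_le_Limsup) simp
  also have "\<dots> \<le> limsup (\<lambda>n. y n + z n)"
    using limsup_subseq_mono[OF r(1), of "\<lambda>n. y n + z n"] by (simp add: comp_def)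
  finally show ?thesis .
qed

lemma tendsto_zero_if_eventually_mult_less:
  fixes f g :: "nat \<Rightarrow> nat"
  assumes "\<And>M. eventually (\<lambda>n. M * f n < g n) sequentially"
  shows "(\<lambda>n. real (f n) / real (g n)) \<longlonglongrightarrow> 0"
proof (rule order_tendstoI)
  fix r :: real assume "0 < r"
  then obtain M :: nat where M: "1 / r < M"
    using reals_Archimedean2 by blast
  show "eventually (\<lambda>n. real (f n) / real (g n) < r) sequentially"
    using assms[of M]
  proof (rule eventually_mono)
    fix n assume "M * f n < g n"
    then have fg: "real M * real (f n) < real (g n)"
      by (metis of_nat_less_iff of_nat_mult)
    have "1 < r * real M"
      using M \<open>0 < r\<close> by (simp add: field_simps)
    then have "real (f n) \<le> r * real M * real (f n)"
      using mult_right_mono[of 1 "r * real M" "real (f n)"] by simp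
    also have "\<dots> < r * real (g n)"
      using fg \<open>0 < r\<close> by (simp add: mult.assoc)
    finally have "real (f n) < r * real (g n)" .
    then show "real (f n) / real (g n) < r"
      using \<open>0 < r\<close> by (simp add: divide_less_eq)
  qed
next
  fix a :: real assume "a < 0"
  then show "eventually (\<lambda>n. a < real (f n) / real (g n)) sequentially"
    by (intro always_eventually allI less_le_trans[OF \<open>a < 0\<close>]) simp
qed

definition small_sumset :: "(nat \<Rightarrow> 'a::ab_group_add set) \<Rightarrow> 'a set \<Rightarrow> 'a set \<Rightarrow> bool" where
  "small_sumset Gs A B \<longleftrightarrow>
     lower_density Gs (sumset A B) < lower_density Gs A + lower_density Gs B
     \<or> (upper_density Gs (sumset A B) < upper_density Gs A + upper_density Gs B
         \<and> (A = B \<or> A = uminus ` B))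
     \<or> upper_density Gs (sumset A B) < upper_density Gs A + lower_density Gs B"

locale exhaustion =
  fixes Gs :: "nat \<Rightarrow> 'a::ab_group_add set"
  assumes exhausting: "exhausting_seq Gs"
begin

lemma finite_Gs: "finite (Gs n)"
  using exhausting unfolding exhausting_seq_def by blast

lemma subgroup_Gs: "is_subgroup (Gs n)"
  using exhausting unfolding exhausting_seq_def by blast

lemma card_Gs_pos: "0 < card (Gs n)"
  using finite_Gs subgroup_zero[OF subgroup_Gs] card_gt_0_iff by blast

lemma mono_Gs: "mono Gs"
  using exhausting unfolding exhausting_seq_def by blast

lemma ex_mem_Gs: "\<exists>n. x \<in> Gs n"
  using exhausting unfolding exhausting_seq_def by blast

lemma eventually_mem_Gs: "eventually (\<lambda>n. x \<in> Gs n) sequentially"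
proof -
  obtain m where "x \<in> Gs m"
    using ex_mem_Gs by blast
  then have "\<forall>n\<ge>m. x \<in> Gs n"
    using monoD[OF mono_Gs] by blast
  then show ?thesis
    unfolding eventually_sequentially by blast
qed

lemma eventually_subset_Gs: "finite F \<Longrightarrow> eventually (\<lambda>n. F \<subseteq> Gs n) sequentially"
  unfolding subset_eq by (rule eventually_ball_finite) (simp_all add: eventually_mem_Gs)

lemma eventually_meets_Gs:
  assumes "x \<in> X"
  shows "eventually (\<lambda>n. X \<inter> Gs n \<noteq> {}) sequentially"
  using eventually_mem_Gs[of x]
proof (rule eventually_mono)
  show "x \<in> Gs n \<Longrightarrow> X \<inter> Gs n \<noteq> {}" for n
    using assms by blast
qed

lemma Stab_subgroup: "is_subgroup (Stab (X :: 'a set))"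
proof -
  \<comment> \<open>In general a stabiliser is only a monoid; here every element lies in a finite subgroup.\<close>
  have "- g \<in> Stab X" if "g \<in> Stab X" for g
  proof -
    obtain n where "g \<in> Gs n"
      using ex_mem_Gs by blast
    have "- g \<in> Stab X \<inter> Gs n"
    proof (rule uminus_mem_if_add_closed)
      show "finite (Stab X \<inter> Gs n)"
        using finite_Gs by simp
      show "0 \<in> Stab X \<inter> Gs n"
        using zero_in_Stab subgroup_zero[OF subgroup_Gs] by blast
      show "x + y \<in> Stab X \<inter> Gs n" if "x \<in> Stab X \<inter> Gs n" "y \<in> Stab X \<inter> Gs n" for x y
        using that Stab_add subgroup_add[OF subgroup_Gs] by blast
      show "g \<in> Stab X \<inter> Gs n"
        using \<open>g \<in> Stab X\<close> \<open>g \<in> Gs n\<close> by blast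
    qed
    then show ?thesis by blast
  qed
  then show ?thesis
    unfolding is_subgroup_def using zero_in_Stab Stab_add by (metis diff_conv_add_uminus)
qed

lemma ratio_nonneg: "0 \<le> ratio Gs X n"
  unfolding ratio_def by simp

lemma ratio_mono: "X \<subseteq> Y \<Longrightarrow> ratio Gs X n \<le> ratio Gs Y n"
  unfolding ratio_def using finite_Gs by (auto intro!: divide_right_mono card_mono)

lemma ratio_uminus: "ratio Gs (uminus ` X) = ratio Gs X"
proof
  fix n
  have "uminus ` X \<inter> Gs n = uminus ` (X \<inter> Gs n)"
    using subgroup_uminus[OF subgroup_Gs] by force
  moreover have "card (uminus ` (X \<inter> Gs n)) = card (X \<inter> Gs n)"
    by (rule card_image) (simp add: inj_on_def)
  ultimately show "ratio Gs (uminus ` X) n = ratio Gs X n"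
    unfolding ratio_def by simp
qed

lemma densities_eq_if_eventually_ratio:
  assumes "eventually (\<lambda>n. ratio Gs X n = c) sequentially"
  shows "lower_density Gs X = c" "upper_density Gs X = c"
  unfolding lower_density_def upper_density_def
  using Liminf_eq[OF assms] Limsup_eq[OF assms] by (simp_all add: Liminf_const Limsup_const)

lemma card_coset_Int_Gs:
  assumes "is_subgroup H" "C \<in> cosets H" "x \<in> C" "x \<in> Gs n"
  shows "card (C \<inter> Gs n) = card (H \<inter> Gs n)"
proof -
  have "(+) x ` H \<inter> Gs n = (+) x ` (H \<inter> Gs n)"
  proof (intro equalityI subsetI)
    fix y assume "y \<in> (+) x ` H \<inter> Gs n"
    then obtain h where "h \<in> H" "y = x + h" "y \<in> Gs n" by blast
    moreover from this have "h \<in> Gs n"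
      using subgroup_diff[OF subgroup_Gs \<open>y \<in> Gs n\<close> \<open>x \<in> Gs n\<close>] by simp
    ultimately show "y \<in> (+) x ` (H \<inter> Gs n)" by blast
  next
    fix y assume "y \<in> (+) x ` (H \<inter> Gs n)"
    then show "y \<in> (+) x ` H \<inter> Gs n"
      using subgroup_add[OF subgroup_Gs \<open>x \<in> Gs n\<close>] by blast
  qed
  then show ?thesis
    using coset_eq_if_mem[OF assms(1-3)] by (simp add: card_translate)
qed

lemma card_Union_cosets_Int_Gs:
  assumes "is_subgroup H" "finite (cosets H)" "\<forall>C\<in>cosets H. C \<inter> Gs n \<noteq> {}" "\<D> \<subseteq> cosets H"
  shows "card (\<Union>\<D> \<inter> Gs n) = card \<D> * card (H \<inter> Gs n)"
proof -
  have "\<Union>\<D> \<inter> Gs n = (\<Union>C\<in>\<D>. C \<inter> Gs n)"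
    by blast
  then have "card (\<Union>\<D> \<inter> Gs n) = card (\<Union>C\<in>\<D>. C \<inter> Gs n)"
    by simp
  also have "\<dots> = (\<Sum>C\<in>\<D>. card (C \<inter> Gs n))"
  proof (rule card_UN_disjoint)
    show "finite \<D>"
      using finite_subset[OF assms(4,2)] .
    show "\<forall>C\<in>\<D>. \<forall>C'\<in>\<D>. C \<noteq> C' \<longrightarrow> C \<inter> Gs n \<inter> (C' \<inter> Gs n) = {}"
    proof (intro ballI impI)
      fix C C' assume "C \<in> \<D>" "C' \<in> \<D>" "C \<noteq> C'"
      show "C \<inter> Gs n \<inter> (C' \<inter> Gs n) = {}"
      proof (rule ccontr)
        assume "C \<inter> Gs n \<inter> (C' \<inter> Gs n) \<noteq> {}"
        then obtain x where "x \<in> C" "x \<in> C'" by blast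
        then show False
          using cosets_disjoint[OF assms(1) _ _ \<open>x \<in> C\<close> \<open>x \<in> C'\<close>] assms(4) \<open>C \<in> \<D>\<close> \<open>C' \<in> \<D>\<close> \<open>C \<noteq> C'\<close>
          by blast
      qed
    qed
  qed (simp add: finite_Gs)
  also have "\<dots> = (\<Sum>C\<in>\<D>. card (H \<inter> Gs n))"
  proof (rule sum.cong[OF refl])
    fix C assume "C \<in> \<D>"
    then obtain x where "x \<in> C" "x \<in> Gs n"
      using assms(3,4) by blast
    then show "card (C \<inter> Gs n) = card (H \<inter> Gs n)"
      using card_coset_Int_Gs[OF assms(1)] \<open>C \<in> \<D>\<close> assms(4) by blast
  qed
  finally show ?thesis by simp
qed

lemma card_sumset_subgroup_Int_Gs:
  assumes "is_subgroup H" "finite (cosets H)" "\<forall>C\<in>cosets H. C \<inter> Gs n \<noteq> {}"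
  shows "card (sumset X H \<inter> Gs n) = cosets_meeting H X * card (H \<inter> Gs n)"
  using card_Union_cosets_Int_Gs[OF assms, of "{C \<in> cosets H. C \<inter> X \<noteq> {}}"]
  unfolding Union_cosets_meeting[OF assms(1)] cosets_meeting_def by simp

lemma sumset_subgroup_Int_Gs_nonempty:
  assumes "\<forall>C\<in>cosets H. C \<inter> Gs n \<noteq> {}" "x \<in> X"
  shows "sumset X H \<inter> Gs n \<noteq> {}"
proof -
  obtain z where "z \<in> (+) x ` H" "z \<in> Gs n"
    using bspec[OF assms(1) coset_in_cosets] by blast
  then show ?thesis
    using \<open>x \<in> X\<close> unfolding sumset_def by blast
qed

lemma eventually_meets_all_cosets:
  assumes "is_subgroup H" "finite (cosets H)"
  shows "eventually (\<lambda>n. \<forall>C\<in>cosets H. C \<inter> Gs n \<noteq> {}) sequentially"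
proof (rule eventually_ball_finite[OF assms(2)], intro ballI)
  fix C assume "C \<in> cosets H"
  then obtain g where "C = (+) g ` H"
    unfolding cosets_def by blast
  then show "eventually (\<lambda>n. C \<inter> Gs n \<noteq> {}) sequentially"
    using eventually_meets_Gs mem_own_coset[OF assms(1)] by blast
qed

lemma ratio_Union_cosets:
  assumes "is_subgroup H" "finite (cosets H)" "\<forall>C\<in>cosets H. C \<inter> Gs n \<noteq> {}" "\<D> \<subseteq> cosets H"
  shows "ratio Gs (\<Union>\<D>) n = ereal (real (card \<D>) / real (card (cosets H)))"
proof -
  have "card (Gs n) = card (cosets H) * card (H \<inter> Gs n)"
    using card_Union_cosets_Int_Gs[OF assms(1-3) order_refl] Union_cosets[OF assms(1)] by simp
  moreover have "0 < card (H \<inter> Gs n)"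
    using subgroup_zero[OF assms(1)] subgroup_zero[OF subgroup_Gs] finite_Gs card_gt_0_iff by blast
  ultimately show ?thesis
    unfolding ratio_def card_Union_cosets_Int_Gs[OF assms] by simp
qed

lemma densities_Union_cosets:
  assumes "is_subgroup H" "finite (cosets H)" "\<D> \<subseteq> cosets H"
  shows "lower_density Gs (\<Union>\<D>) = ereal (real (card \<D>) / real (card (cosets H)))"
    and "upper_density Gs (\<Union>\<D>) = ereal (real (card \<D>) / real (card (cosets H)))"
  using eventually_meets_all_cosets[OF assms(1,2)]
  by (simp_all add: densities_eq_if_eventually_ratio eventually_mono ratio_Union_cosets assms)

lemma densities_subgroup:
  assumes "is_subgroup H" "finite (cosets H)"
  shows "lower_density Gs H = ereal (1 / real (card (cosets H)))"
    and "upper_density Gs H = ereal (1 / real (card (cosets H)))"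
  using densities_Union_cosets[OF assms, of "{H}"] subgroup_in_cosets[of H] by simp_all

lemma densities_sumset_subgroup:
  assumes "is_subgroup H" "finite (cosets H)"
  shows "lower_density Gs (sumset X H) = ereal (real (cosets_meeting H X) / real (card (cosets H)))"
    and "upper_density Gs (sumset X H) = ereal (real (cosets_meeting H X) / real (card (cosets H)))"
  using densities_Union_cosets[OF assms, of "{C \<in> cosets H. C \<inter> X \<noteq> {}}"]
  unfolding Union_cosets_meeting[OF assms(1)] cosets_meeting_def by simp_all

lemma ratio_add_le_local_Stab:
  fixes A B :: "'a set"
  assumes "A \<inter> Gs n \<noteq> {}" "B \<inter> Gs n \<noteq> {}"
  shows "ratio Gs A n + ratio Gs B n
    \<le> ereal (real (card (Stab (sumset (A \<inter> Gs n) (B \<inter> Gs n)))) / real (card (Gs n)))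
      + ratio Gs (sumset A B) n"
proof -
  let ?S = "sumset (A \<inter> Gs n) (B \<inter> Gs n)"
  have "card (A \<inter> Gs n) + card (B \<inter> Gs n) \<le> card ?S + card (Stab ?S)"
    using assms finite_Gs by (intro kneser_inequality) auto
  moreover have "card ?S \<le> card (sumset A B \<inter> Gs n)"
    using finite_Gs sumset_mono[of "A \<inter> Gs n" A "B \<inter> Gs n" B]
      sumset_subset_subgroup[OF subgroup_Gs, of "A \<inter> Gs n" n "B \<inter> Gs n"]
    by (intro card_mono) auto
  ultimately have "real (card (A \<inter> Gs n)) + real (card (B \<inter> Gs n))
      \<le> real (card (Stab ?S)) + real (card (sumset A B \<inter> Gs n))"
    by linarith
  then show ?thesis
    using card_Gs_pos[of n] unfolding ratio_def
    by (simp add: add_divide_distrib[symmetric] divide_right_mono)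
qed

lemma not_small_sumset_if_eventually_le:
  fixes A B :: "'a set" and u :: "nat \<Rightarrow> ereal"
  assumes "u \<longlonglongrightarrow> 0"
    and le: "eventually (\<lambda>n. ratio Gs A n + ratio Gs B n \<le> u n + ratio Gs (sumset A B) n) sequentially"
  shows "\<not> small_sumset Gs A B"
proof -
  let ?a = "ratio Gs A" and ?b = "ratio Gs B" and ?s = "ratio Gs (sumset A B)"
  have liminf_s: "liminf (\<lambda>n. u n + ?s n) = liminf ?s"
    using ereal_liminf_lim_add[OF assms(1)] by simp
  have limsup_s: "limsup (\<lambda>n. u n + ?s n) = limsup ?s"
    using ereal_limsup_lim_add[OF assms(1)] by simp
  have limsup_sum: "limsup (\<lambda>n. ?a n + ?b n) \<le> limsup ?s"
    using Limsup_mono[OF le] limsup_s by simp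
  have "liminf ?a + liminf ?b \<le> liminf ?s"
    using Liminf_add_le[of sequentially ?a ?b] Liminf_mono[OF le] liminf_s ratio_nonneg
    by (metis always_eventually order_trans trivial_limit_sequentially)
  moreover have "limsup ?a + liminf ?b \<le> limsup ?s"
    using limsup_add_liminf_le[OF ratio_nonneg ratio_nonneg] limsup_sum by (rule order_trans)
  moreover have "limsup ?a + limsup ?a \<le> limsup ?s" if "?a = ?b"
  proof -
    have "limsup (\<lambda>n. ?a n + ?a n) = limsup ?a + limsup ?a"
      using Limsup_ereal_mult_left[of sequentially 2 ?a] by (simp add: mult_2_ereal)
    then show ?thesis
      using limsup_sum that by simp
  qed
  moreover have "?a = ?b" if "A = B \<or> A = uminus ` B"
    using that ratio_uminus by auto
  ultimately show ?thesis
    unfolding small_sumset_def lower_density_def upper_density_def by (auto simp: not_less)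
qed

lemma frequently_card_Gs_le_local_Stab:
  fixes A B :: "'a set"
  assumes "small_sumset Gs A B" "A \<noteq> {}" "B \<noteq> {}"
  shows "\<exists>M. frequently (\<lambda>n. card (Gs n) \<le> M * card (Stab (sumset (A \<inter> Gs n) (B \<inter> Gs n))))
    sequentially"
proof (rule ccontr)
  let ?L = "\<lambda>n. card (Stab (sumset (A \<inter> Gs n) (B \<inter> Gs n)))"
  obtain a b where "a \<in> A" "b \<in> B"
    using assms(2,3) by blast
  assume "\<not> ?thesis"
  then have "eventually (\<lambda>n. M * ?L n < card (Gs n)) sequentially" for M
    by (simp add: not_frequently not_le)
  then have "(\<lambda>n. real (?L n) / real (card (Gs n))) \<longlonglongrightarrow> 0"
    by (rule tendsto_zero_if_eventually_mult_less)
  then have "(\<lambda>n. ereal (real (?L n) / real (card (Gs n)))) \<longlonglongrightarrow> 0"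
    by (simp add: zero_ereal_def)
  moreover have "eventually (\<lambda>n. ratio Gs A n + ratio Gs B n
      \<le> ereal (real (?L n) / real (card (Gs n))) + ratio Gs (sumset A B) n) sequentially"
    using eventually_conj[OF eventually_meets_Gs[OF \<open>a \<in> A\<close>] eventually_meets_Gs[OF \<open>b \<in> B\<close>]]
    by (rule eventually_mono) (intro ratio_add_le_local_Stab; blast)
  ultimately show False
    using not_small_sumset_if_eventually_le assms(1) by blast
qed

lemma eventually_notin_local_Stab:
  fixes A B :: "'a set"
  assumes "d \<notin> Stab (sumset A B)"
  shows "eventually (\<lambda>n. d \<notin> Stab (sumset (A \<inter> Gs n) (B \<inter> Gs n))) sequentially"
proof -
  obtain a b where "a \<in> A" "b \<in> B" "d + (a + b) \<notin> sumset A B"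
    using assms unfolding Stab_def sumset_def by blast
  then have "d + (a + b) \<notin> sumset (A \<inter> Gs n) (B \<inter> Gs n)" for n
    using sumset_mono[of "A \<inter> Gs n" A "B \<inter> Gs n" B] by blast
  moreover have "eventually (\<lambda>n. {a, b} \<subseteq> Gs n) sequentially"
    using eventually_subset_Gs[of "{a, b}"] by simp
  ultimately show ?thesis
  proof (elim eventually_mono)
    fix n assume "{a, b} \<subseteq> Gs n"
    then have "a + b \<in> sumset (A \<inter> Gs n) (B \<inter> Gs n)"
      using \<open>a \<in> A\<close> \<open>b \<in> B\<close> by (simp add: add_in_sumset)
    then show "d \<notin> Stab (sumset (A \<inter> Gs n) (B \<inter> Gs n))"
      using \<open>d + (a + b) \<notin> sumset (A \<inter> Gs n) (B \<inter> Gs n)\<close> Stab_mem by blast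
  qed
qed

lemma local_Stab_subset_Gs:
  fixes A B :: "'a set"
  assumes "a \<in> A \<inter> Gs n" "b \<in> B \<inter> Gs n"
  shows "Stab (sumset (A \<inter> Gs n) (B \<inter> Gs n)) \<subseteq> Gs n"
proof (rule Stab_subset_subgroup[OF subgroup_Gs])
  show "a + b \<in> sumset (A \<inter> Gs n) (B \<inter> Gs n)"
    using assms by (rule add_in_sumset)
  show "sumset (A \<inter> Gs n) (B \<inter> Gs n) \<subseteq> Gs n"
    by (rule sumset_subset_subgroup[OF subgroup_Gs]) auto
qed

lemma eventually_incongruent_mod_local_Stab:
  fixes A B F :: "'a set"
  assumes "finite F"
    and incongruent: "\<And>x y. x \<in> F \<Longrightarrow> y \<in> F \<Longrightarrow> x \<noteq> y \<Longrightarrow> x - y \<notin> Stab (sumset A B)"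
  shows "eventually (\<lambda>n. \<forall>x\<in>F. \<forall>y\<in>F. x \<noteq> y \<longrightarrow> x - y \<notin> Stab (sumset (A \<inter> Gs n) (B \<inter> Gs n)))
    sequentially"
proof (intro eventually_ball_finite[OF assms(1)] ballI)
  fix x y assume "x \<in> F" "y \<in> F"
  show "eventually (\<lambda>n. x \<noteq> y \<longrightarrow> x - y \<notin> Stab (sumset (A \<inter> Gs n) (B \<inter> Gs n))) sequentially"
  proof (cases "x = y")
    case False
    then show ?thesis
      using eventually_notin_local_Stab[OF incongruent[OF \<open>x \<in> F\<close> \<open>y \<in> F\<close> False]] by simp
  qed simp
qed

lemma finite_cosets_Stab_sumset:
  fixes A B :: "'a set"
  assumes "small_sumset Gs A B" "A \<noteq> {}" "B \<noteq> {}"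
  shows "finite (cosets (Stab (sumset A B)))"
proof -
  let ?L = "\<lambda>n. Stab (sumset (A \<inter> Gs n) (B \<inter> Gs n))"
  obtain M where M: "frequently (\<lambda>n. card (Gs n) \<le> M * card (?L n)) sequentially"
    using frequently_card_Gs_le_local_Stab[OF assms] by blast
  obtain a b where "a \<in> A" "b \<in> B"
    using assms(2,3) by blast
  show ?thesis
  proof (rule finite_cosets_if_incongruent_bounded[OF Stab_subgroup])
    fix F assume "finite F"
      and "\<And>x y. x \<in> F \<Longrightarrow> y \<in> F \<Longrightarrow> x \<noteq> y \<Longrightarrow> x - y \<notin> Stab (sumset A B)"
    then have "eventually (\<lambda>n. (\<forall>x\<in>F. \<forall>y\<in>F. x \<noteq> y \<longrightarrow> x - y \<notin> ?L n) \<and> F \<union> {a, b} \<subseteq> Gs n)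
        sequentially"
      by (intro eventually_conj eventually_incongruent_mod_local_Stab eventually_subset_Gs) auto
    then have "frequently (\<lambda>n. card (Gs n) \<le> M * card (?L n)
        \<and> (\<forall>x\<in>F. \<forall>y\<in>F. x \<noteq> y \<longrightarrow> x - y \<notin> ?L n) \<and> F \<union> {a, b} \<subseteq> Gs n) sequentially"
      by (rule frequently_eventually_frequently[OF M])
    then obtain n where n: "card (Gs n) \<le> M * card (?L n)"
      "\<forall>x\<in>F. \<forall>y\<in>F. x \<noteq> y \<longrightarrow> x - y \<notin> ?L n" "F \<union> {a, b} \<subseteq> Gs n"
      by (auto dest: frequently_ex)
    have "?L n \<subseteq> Gs n"
      using \<open>a \<in> A\<close> \<open>b \<in> B\<close> n(3) by (intro local_Stab_subset_Gs) auto
    then have "finite (?L n)"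
      using finite_Gs by (rule finite_subset)
    have "card F * card (?L n) \<le> card (Gs n)"
    proof (rule card_mult_card_subgroup_le[OF _ \<open>finite (?L n)\<close> finite_Gs \<open>finite F\<close>])
      show "is_subgroup (?L n)"
        using finite_Gs by (intro is_subgroup_Stab_finite finite_sumset) auto
      show "(+) x ` ?L n \<subseteq> Gs n" if "x \<in> F" for x
        using that n(3) \<open>?L n \<subseteq> Gs n\<close> subgroup_add[OF subgroup_Gs] by blast
      show "x - y \<notin> ?L n" if "x \<in> F" "y \<in> F" "x \<noteq> y" for x y
        using that n(2) by blast
    qed
    moreover have "0 < card (?L n)"
      using zero_in_Stab \<open>finite (?L n)\<close> card_gt_0_iff by blast
    ultimately show "card F \<le> M"
      using n(1) by (meson le_trans mult_le_cancel2)
  qed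
qed

lemma cosets_meeting_sumset_less:
  fixes A B :: "'a set"
  defines "H \<equiv> Stab (sumset A B)"
  assumes "small_sumset Gs A B" "finite (cosets H)"
  shows "cosets_meeting H (sumset A B) < cosets_meeting H A + cosets_meeting H B"
proof -
  let ?q = "real (card (cosets H))"
  have H: "is_subgroup H"
    unfolding H_def by (rule Stab_subgroup)
  have upper_le: "upper_density Gs X \<le> ereal (real (cosets_meeting H X) / ?q)" for X
  proof -
    have "X \<subseteq> sumset X H"
      using add_in_sumset[of _ X 0 H] subgroup_zero[OF H] by fastforce
    then have "upper_density Gs X \<le> upper_density Gs (sumset X H)"
      unfolding upper_density_def by (intro Limsup_mono always_eventually allI ratio_mono)
    then show ?thesis
      using densities_sumset_subgroup(2)[OF H assms(3)] by simp
  qed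
  have lower_le: "lower_density Gs X \<le> ereal (real (cosets_meeting H X) / ?q)" for X
    using upper_le[of X] Liminf_le_Limsup[of sequentially "ratio Gs X"]
    unfolding lower_density_def upper_density_def by simp
  have "sumset (sumset A B) H = sumset A B"
    unfolding H_def by (rule sumset_Stab)
  then have dens_S: "lower_density Gs (sumset A B) = ereal (real (cosets_meeting H (sumset A B)) / ?q)"
    "upper_density Gs (sumset A B) = ereal (real (cosets_meeting H (sumset A B)) / ?q)"
    using densities_sumset_subgroup[OF H assms(3), of "sumset A B"] by simp_all
  have "ereal (real (cosets_meeting H (sumset A B)) / ?q)
      < ereal (real (cosets_meeting H A) / ?q) + ereal (real (cosets_meeting H B) / ?q)"
    using assms(2) unfolding small_sumset_def dens_S
    by (elim disjE conjE) (erule order_less_le_trans, intro add_mono lower_le upper_le)+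
  then have "real (cosets_meeting H (sumset A B)) < real (cosets_meeting H A) + real (cosets_meeting H B)"
    by (simp add: add_divide_distrib[symmetric] divide_less_cancel)
  then show ?thesis
    by linarith
qed

lemma cosets_meeting_sumset_ge:
  fixes A B :: "'a set"
  defines "H \<equiv> Stab (sumset A B)"
  assumes fin: "finite (cosets H)" and "A \<noteq> {}" "B \<noteq> {}"
  shows "cosets_meeting H A + cosets_meeting H B \<le> cosets_meeting H (sumset A B) + 1"
proof -
  have H: "is_subgroup H"
    unfolding H_def by (rule Stab_subgroup)
  obtain n where meets: "\<forall>C\<in>cosets H. C \<inter> Gs n \<noteq> {}"
    using eventually_happens'[OF _ eventually_meets_all_cosets[OF H fin]] by auto
  let ?h = "card (H \<inter> Gs n)"
  let ?A = "sumset A H \<inter> Gs n" and ?B = "sumset B H \<inter> Gs n"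
  note card_hull = card_sumset_subgroup_Int_Gs[OF H fin meets]
  obtain a b where "a \<in> A" "b \<in> B"
    using assms(3,4) by blast
  then have "?A \<noteq> {}" "?B \<noteq> {}"
    using sumset_subgroup_Int_Gs_nonempty[OF meets] by blast+
  moreover have "finite ?A" "finite ?B"
    using finite_Gs by simp_all
  ultimately have kneser: "card ?A + card ?B \<le> card (sumset ?A ?B) + card (Stab (sumset ?A ?B))"
    by (intro kneser_inequality)
  have sub: "sumset ?A ?B \<subseteq> sumset A B \<inter> Gs n"
    using sumset_mono[of ?A "sumset A H" ?B "sumset B H"] sumset_sumset_Stab_subset[of A B]
      sumset_subset_subgroup[OF subgroup_Gs, of ?A n ?B]
    unfolding H_def by blast
  have "card (sumset ?A ?B) \<le> cosets_meeting H (sumset A B) * ?h"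
    using card_mono[OF _ sub] finite_Gs card_hull[of "sumset A B"] sumset_Stab[of "sumset A B"]
    unfolding H_def by simp
  moreover have "card (Stab (sumset ?A ?B)) \<le> ?h"
  proof (rule card_mono)
    show "finite (H \<inter> Gs n)"
      using finite_Gs by simp
    obtain s where "s \<in> sumset ?A ?B"
      using \<open>?A \<noteq> {}\<close> \<open>?B \<noteq> {}\<close> add_in_sumset by blast
    then have "Stab (sumset ?A ?B) \<subseteq> Gs n"
      using sub by (intro Stab_subset_subgroup[OF subgroup_Gs]) auto
    moreover have "Stab (sumset ?A ?B) \<subseteq> H"
      using Stab_restricted_sumset_subset[of A B "Gs n"] H meets unfolding H_def by blast
    ultimately show "Stab (sumset ?A ?B) \<subseteq> H \<inter> Gs n"
      by blast
  qed
  ultimately have "(cosets_meeting H A + cosets_meeting H B) * ?h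
      \<le> (cosets_meeting H (sumset A B) + 1) * ?h"
    using kneser card_hull[of A] card_hull[of B] by (simp add: algebra_simps)
  moreover have "0 < ?h"
    using subgroup_zero[OF H] subgroup_zero[OF subgroup_Gs] finite_Gs card_gt_0_iff by blast
  ultimately show ?thesis
    using mult_le_cancel2 by blast
qed

end

theorem theorem1p1:
  fixes Gs :: "nat \<Rightarrow> 'a::ab_group_add set" and A B :: "'a set"
  assumes "infinite (UNIV :: 'a set)"
    and "exhausting_seq Gs"
    and "lower_density Gs (sumset A B) < lower_density Gs A + lower_density Gs B
       \<or> (upper_density Gs (sumset A B) < upper_density Gs A + upper_density Gs B
           \<and> (A = B \<or> A = uminus ` B))
       \<or> upper_density Gs (sumset A B) < upper_density Gs A + lower_density Gs B"
  shows "is_subgroup (Stab (sumset A B))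
    \<and> finite (cosets (Stab (sumset A B)))
    \<and> lower_density Gs (Stab (sumset A B)) = ereal (1 / real (card (cosets (Stab (sumset A B)))))
    \<and> upper_density Gs (Stab (sumset A B)) = ereal (1 / real (card (cosets (Stab (sumset A B)))))
    \<and> cosets_meeting (Stab (sumset A B)) (sumset A B)
        = cosets_meeting (Stab (sumset A B)) A + cosets_meeting (Stab (sumset A B)) B - 1"
proof -
  interpret exhaustion Gs
    by unfold_locales (rule assms(2))
  define H where "H = Stab (sumset A B)"
  have small: "small_sumset Gs A B"
    using assms(3) unfolding small_sumset_def .
  have H: "is_subgroup H"
    unfolding H_def by (rule Stab_subgroup)
  have "finite (cosets H) \<and> cosets_meeting H (sumset A B) = cosets_meeting H A + cosets_meeting H B - 1"
  proof (cases "A = {} \<or> B = {}")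
    case True
    then have "sumset A B = {}" "H = UNIV"
      unfolding H_def sumset_def Stab_def by auto
    then show ?thesis
      using True cosets_meeting_le_card_cosets[of H A] cosets_meeting_le_card_cosets[of H B]
      by (auto simp: cosets_UNIV cosets_meeting_empty)
  next
    case False
    then have "finite (cosets H)"
      using finite_cosets_Stab_sumset[OF small] unfolding H_def by blast
    then show ?thesis
      using cosets_meeting_sumset_less[OF small] cosets_meeting_sumset_ge False
      unfolding H_def by fastforce
  qed
  then show ?thesis
    using H densities_subgroup[OF H] unfolding H_def by simp
qed

end
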